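(* Let $H$ be a simple graph which is neither a matching nor a star, and let $\alpha,\beta>0$. (1) If $\operatorname{ex}(K_n,H)=O(n^\alpha)$ as $n\to\infty$, then $\mathcal{E}_H(k)=\Omega(k^{2/\alpha})$ as $k\to\infty$. (2) If $\operatorname{ex}(K_n,H)=\Omega(n^\beta)$ as $n\to\infty$, then $\mathcal{E}^*_H(k)=O(k^{3-\beta})$ as $k\to\infty$.
   Context: Graphs are 2-uniform without isolated vertices; a matching is $sK_2$ and a star is $K_{1,s}$. Multigraphs may have parallel edges (no loops), with $e(\cdot)$ counting multiplicity. $\operatorname{ex}(G,H)$ is the maximum number of edges of a sub-multigraph of $G$ containing no copy of $H$. $\mathcal{E}_H(k):=\sup\{e(G): G\text{ simple}, \operatorname{ex}(G,H)<k\}$ and $\mathcal{E}^*_H(k):=\sup\{e(G): G\text{ multigraph}, \operatorname{ex}(G,H)<k\}$. *)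

theory Defs
  imports Complex_Main "HOL-Library.Multiset" "HOL-Library.Landau_Symbols" "HOL-Library.Extended_Real"
begin

text \<open>A simple graph is a finite set of 2-element vertex sets (no isolated vertices:
  the vertex set is the union of the edges).  A multigraph is a finite multiset of
  2-element vertex sets (parallel edges allowed, no loops); e(.) = size.\<close>

definition simple_graph :: "'a set set \<Rightarrow> bool" where
  "simple_graph G \<longleftrightarrow> finite G \<and> (\<forall>e\<in>G. card e = 2)"

definition multigraph :: "'a set multiset \<Rightarrow> bool" where
  "multigraph M \<longleftrightarrow> (\<forall>e\<in>#M. card e = 2)"

definition verts :: "'a set set \<Rightarrow> 'a set" where
  "verts H = \<Union>H"

definition contains_copy :: "'b set multiset \<Rightarrow> 'a set set \<Rightarrow> bool" where
  "contains_copy M H \<longleftrightarrow> (\<exists>f. inj_on f (verts H) \<and> (\<forall>e\<in>H. f ` e \<in># M))"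

definition exM :: "'b set multiset \<Rightarrow> 'a set set \<Rightarrow> nat" where
  "exM G H = Max {size G' | G'. G' \<subseteq># G \<and> \<not> contains_copy G' H}"

text \<open>ex(G,H) for a simple host graph G (its sub-multigraphs are its subgraphs).\<close>
definition ex :: "'b set set \<Rightarrow> 'a set set \<Rightarrow> nat" where
  "ex G H = exM (mset_set G) H"

definition complete_graph :: "nat \<Rightarrow> nat set set" where
  "complete_graph n = {{i, j} | i j. i < j \<and> j < n}"

definition is_matching :: "'a set set \<Rightarrow> bool" where
  "is_matching H \<longleftrightarrow> (\<forall>e\<in>H. \<forall>e'\<in>H. e \<noteq> e' \<longrightarrow> e \<inter> e' = {})"

definition is_star :: "'a set set \<Rightarrow> bool" where
  "is_star H \<longleftrightarrow> (\<exists>v. \<forall>e\<in>H. v \<in> e)"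

text \<open>Host graphs are taken on vertex type nat (every finite graph has an isomorphic copy).\<close>
definition E_simple :: "'a set set \<Rightarrow> nat \<Rightarrow> ereal" where
  "E_simple H k = Sup ((\<lambda>G. ereal (real (card G))) `
      {G :: nat set set. simple_graph G \<and> ex G H < k})"

definition E_multi :: "'a set set \<Rightarrow> nat \<Rightarrow> ereal" where
  "E_multi H k = Sup ((\<lambda>G. ereal (real (size G))) `
      {G :: nat set multiset. multigraph G \<and> exM G H < k})"

end

theory Submission
  imports Defs "HOL-Combinatorics.Permutations"
begin

text \<open>Lower bound: if \<open>ex(K_n, H) \<le> C n^\<alpha>\<close>, then \<open>K_n\<close> itself, with \<open>n \<approx> (k / 2C)^(1/\<alpha>)\<close>,
  has \<open>ex(K_n, H) < k\<close> and about \<open>k^(2/\<alpha>)\<close> edges.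

  Upper bound: let \<open>G\<close> be a multigraph with \<open>ex(G, H) < k\<close>. As \<open>H\<close> is neither a matching nor a
  star, every matching and every star of \<open>G\<close> is \<open>H\<close>-free. So a maximal matching gives a vertex
  cover of fewer than \<open>2k\<close> vertices, each of degree less than \<open>k\<close>, and \<open>e(G) \<le> 2k^2\<close>. If \<open>H\<close> is a
  star forest, then \<open>ex(K_n, H) = O(n)\<close>, which forces \<open>\<beta> \<le> 1\<close>, so \<open>2k^2 \<le> 2k^(3-\<beta>)\<close>.
  Otherwise the star forest joining each vertex outside the cover to the cover is \<open>H\<close>-free, so
  \<open>G\<close> has fewer than \<open>3k\<close> vertices. Placing \<open>G\<close> at random into \<open>K_3k\<close> and intersecting it with
  an extremal \<open>H\<close>-free graph gives \<open>k > ex(G, H) \<ge> e(G) ex(K_3k, H) / (3k choose 2)\<close>, hence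
  \<open>e(G) = O(k^(3-\<beta>))\<close>.\<close>

subsection \<open>Copies, extremal numbers and degrees\<close>

lemma inj_on_edge_image: "inj_on f (verts H) \<Longrightarrow> inj_on ((`) f) H"
  unfolding verts_def by (rule inj_on_image)

lemma contains_copy_set_mono:
  assumes "contains_copy M H" "set_mset M \<subseteq> set_mset M'"
  shows "contains_copy M' H"
  using assms unfolding contains_copy_def by blast

lemma contains_copy_image:
  assumes "contains_copy M H" "inj_on g (\<Union>(set_mset M))"
  shows "contains_copy (image_mset ((`) g) M) H"
proof -
  obtain f where f: "inj_on f (verts H)" "\<forall>e\<in>H. f ` e \<in># M"
    using assms(1) unfolding contains_copy_def by blast
  have "f ` verts H \<subseteq> \<Union>(set_mset M)" using f(2) unfolding verts_def by blast
  then have "inj_on (g \<circ> f) (verts H)"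
    using f(1) assms(2) by (blast intro: comp_inj_on inj_on_subset)
  moreover have "(g \<circ> f) ` e \<in># image_mset ((`) g) M" if "e \<in> H" for e
  proof -
    have "f ` e \<in># M" using f(2) that by blast
    then show ?thesis by (auto intro!: image_eqI[where x="f ` e"])
  qed
  ultimately show ?thesis unfolding contains_copy_def by blast
qed

lemma not_contains_copy_matching:
  assumes "\<not> is_matching H" "is_matching (set_mset M)"
  shows "\<not> contains_copy M H"
proof
  assume "contains_copy M H"
  then obtain f where f: "inj_on f (verts H)" "\<forall>e\<in>H. f ` e \<in># M"
    unfolding contains_copy_def by blast
  obtain e e' x where e: "e \<in> H" "e' \<in> H" "e \<noteq> e'" "x \<in> e" "x \<in> e'"
    using assms(1) unfolding is_matching_def by blast
  have "f ` e \<noteq> f ` e'" using inj_on_edge_image[OF f(1)] e(1-3) by (auto dest: inj_onD)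
  moreover have "f ` e \<in># M" "f ` e' \<in># M" using f(2) e(1,2) by auto
  ultimately have "f ` e \<inter> f ` e' = {}"
    using assms(2) unfolding is_matching_def by (simp only: Ball_def) blast
  then show False using e(4,5) by blast
qed

lemma not_contains_copy_star:
  assumes "\<not> is_star H" "\<forall>e\<in>#M. v \<in> e"
  shows "\<not> contains_copy M H"
proof
  assume "contains_copy M H"
  then obtain f where f: "inj_on f (verts H)" "\<forall>e\<in>H. f ` e \<in># M"
    unfolding contains_copy_def by blast
  obtain e0 where "e0 \<in> H" using assms(1) unfolding is_star_def by blast
  then obtain u where u: "u \<in> e0" "f u = v" using f(2) assms(2) by fastforce
  have "u \<in> e" if e: "e \<in> H" for e
  proof -
    obtain x where "x \<in> e" "f x = v" using f(2) assms(2) e by fastforce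
    moreover have "x = u"
      using calculation u \<open>e0 \<in> H\<close> e by (intro inj_onD[OF f(1)]) (auto simp: verts_def)
    ultimately show ?thesis by simp
  qed
  then show False using assms(1) unfolding is_star_def by blast
qed

lemma finite_sizes_submsets: "finite {size G' | G'. G' \<subseteq># G \<and> P G'}"
  by (rule finite_subset[of _ "{0..size G}"]) (auto dest: size_mset_mono)

lemma exM_ge_size:
  assumes "G' \<subseteq># G" "\<not> contains_copy G' H"
  shows "size G' \<le> exM G H"
  unfolding exM_def by (rule Max_ge[OF finite_sizes_submsets]) (use assms in auto)

lemma exM_attained:
  assumes "H \<noteq> {}"
  obtains G' where "G' \<subseteq># G" "\<not> contains_copy G' H" "size G' = exM G H"
proof -
  let ?S = "{size G' | G'. G' \<subseteq># G \<and> \<not> contains_copy G' H}"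
  have "finite ?S" by (rule finite_sizes_submsets)
  moreover have "\<not> contains_copy {#} H" using assms unfolding contains_copy_def by auto
  then have "0 \<in> ?S" by (auto intro!: exI[of _ "{#}"])
  then have "?S \<noteq> {}" by blast
  ultimately have "Max ?S \<in> ?S" by (rule Max_in)
  then show ?thesis using that unfolding exM_def by auto
qed

lemma submset_mset_set:
  assumes "F \<subseteq># mset_set A"
  shows "F = mset_set (set_mset F)"
proof (rule multiset_eqI)
  fix x
  have "count F x \<le> count (mset_set A) x" using assms by (rule mset_subset_eq_count)
  also have "\<dots> \<le> 1" by (cases "finite A \<and> x \<in> A") auto
  finally have "count F x \<le> 1" .
  then show "count F x = count (mset_set (set_mset F)) x"
  proof (cases "x \<in># F")
    case True
    then have "0 < count F x" by simp
    with \<open>count F x \<le> 1\<close> have "count F x = 1" by linarith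
    with True show ?thesis by simp
  qed (simp add: not_in_iff)
qed

lemma ex_attained:
  assumes "finite G" "H \<noteq> {}"
  obtains F where "F \<subseteq> G" "\<not> contains_copy (mset_set F) H" "card F = ex G H"
proof -
  obtain F where F: "F \<subseteq># mset_set G" "\<not> contains_copy F H" "size F = ex G H"
    using exM_attained[OF assms(2)] unfolding ex_def by blast
  have "F = mset_set (set_mset F)" using F(1) by (rule submset_mset_set)
  moreover have "set_mset F \<subseteq> G" using set_mset_mono[OF F(1)] assms(1) by simp
  ultimately show ?thesis using that[of "set_mset F"] F by (metis size_mset_set)
qed

definition deg :: "'a set multiset \<Rightarrow> 'a \<Rightarrow> nat" where
  "deg G v = size (filter_mset (\<lambda>e. v \<in> e) G)"

lemma deg_lt_if_exM_lt:
  assumes "\<not> is_star H" "exM G H < k"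
  shows "deg G v < k"
proof -
  have "deg G v \<le> exM G H" unfolding deg_def
    by (rule exM_ge_size[OF multiset_filter_subset not_contains_copy_star[OF assms(1), where v=v]]) simp
  then show ?thesis using assms(2) by simp
qed

lemma size_le_sum_deg_cover:
  assumes "finite C" "\<forall>e\<in>#G. e \<inter> C \<noteq> {}"
  shows "size G \<le> (\<Sum>v\<in>C. deg G v)"
  using assms(2)
proof (induction G)
  case empty then show ?case by simp
next
  case (add e G)
  obtain w where w: "w \<in> e" "w \<in> C" using add.prems by auto
  have "1 \<le> card (C \<inter> e)" using w assms(1) by (simp add: Suc_le_eq card_gt_0_iff) blast
  also have "card (C \<inter> e) = (\<Sum>v\<in>C. if v \<in> e then 1 else 0)"
    using assms(1) by (simp add: sum.If_cases)
  finally have "size G + 1 \<le> (\<Sum>v\<in>C. deg G v) + (\<Sum>v\<in>C. if v \<in> e then 1 else 0)"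
    using add by simp
  also have "\<dots> = (\<Sum>v\<in>C. deg (add_mset e G) v)"
    by (simp add: deg_def sum.distrib[symmetric]) (rule sum.cong, auto)
  finally show ?case by simp
qed

subsection \<open>Vertex covers and star forests\<close>

lemma multigraph_edge_card: "multigraph G \<Longrightarrow> e \<in># G \<Longrightarrow> card e = 2"
  unfolding multigraph_def by blast

lemma finite_vertices_multigraph: "multigraph G \<Longrightarrow> finite (\<Union>(set_mset G))"
  by (rule finite_Union) (simp, metis card.infinite multigraph_edge_card zero_neq_numeral)

lemma mset_set_subseteq_mset: "F \<subseteq> set_mset G \<Longrightarrow> mset_set F \<subseteq># G"
  by (meson finite_set_mset finite_subset mset_set_set_mset_msubset msubset_mset_set_iff
      subset_mset.order_trans)

lemma multigraph_vertex_cover: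
  assumes G: "multigraph G" and nm: "\<not> is_matching H" and k: "exM G H < k"
  obtains C where "finite C" "card C \<le> 2 * (k - 1)" "\<forall>e\<in>#G. e \<inter> C \<noteq> {}"
proof -
  let ?matchings = "{M. M \<subseteq> set_mset G \<and> is_matching M}"
  have "finite ?matchings" by (rule finite_subset[of _ "Pow (set_mset G)"]) auto
  moreover have "{} \<in> ?matchings" unfolding is_matching_def by simp
  then have "?matchings \<noteq> {}" by blast
  ultimately obtain M where M: "M \<in> ?matchings"
    and max: "\<forall>M'\<in>?matchings. M \<subseteq> M' \<longrightarrow> M = M'"
    by (meson finite_has_maximal)
  have finM: "finite M" using M finite_subset by blast
  have "\<not> contains_copy (mset_set M) H"
    by (rule not_contains_copy_matching[OF nm]) (use M finM in simp)
  then have "size (mset_set M) \<le> exM G H" using M by (intro exM_ge_size mset_set_subseteq_mset) auto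
  then have "card M \<le> exM G H" by simp
  then have cardM: "card M \<le> k - 1" using k by linarith
  have "card (\<Union>M) \<le> (\<Sum>e\<in>M. card e)" by (rule card_Union_le_sum_card)
  also have "\<dots> = 2 * card M" using M G by (simp add: multigraph_edge_card subset_iff)
  finally have "card (\<Union>M) \<le> 2 * (k - 1)" using cardM by linarith
  moreover have "finite (\<Union>M)"
    by (rule finite_subset[OF _ finite_vertices_multigraph[OF G]]) (use M in blast)
  moreover have "e \<inter> \<Union>M \<noteq> {}" if e: "e \<in># G" for e
  proof
    assume disj: "e \<inter> \<Union>M = {}"
    then have "insert e M \<in> ?matchings" using M e unfolding is_matching_def by blast
    then have "M = insert e M" by (rule max[rule_format, OF _ subset_insertI])
    then have "e \<in> M" by blast
    then have "e = {}" using disj by blast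
    then show False using multigraph_edge_card[OF G e] by simp
  qed
  ultimately show ?thesis using that by blast
qed

lemma size_le_if_exM_lt:
  assumes "multigraph G" "\<not> is_matching H" "\<not> is_star H" "exM G H < k"
  shows "size G \<le> 2 * k * k"
proof -
  obtain C where C: "finite C" "card C \<le> 2 * (k - 1)" "\<forall>e\<in>#G. e \<inter> C \<noteq> {}"
    using multigraph_vertex_cover[OF assms(1,2,4)] .
  have "size G \<le> (\<Sum>v\<in>C. deg G v)" using size_le_sum_deg_cover[OF C(1,3)] .
  also have "\<dots> \<le> card C * k" using sum_mono[of C "deg G" "\<lambda>_. k"] deg_lt_if_exM_lt[OF assms(3,4)]
    by (simp add: less_imp_le)
  also have "\<dots> \<le> 2 * k * k" using C(2) by (intro mult_right_mono) linarith+
  finally show ?thesis .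
qed

text \<open>Every edge has exactly one end in \<open>L\<close>, and that end is a leaf: the components are stars
  with centres outside \<open>L\<close> (an isolated edge contributes one of its two ends to \<open>L\<close>).\<close>

definition leaf_set :: "'a set set \<Rightarrow> 'a set \<Rightarrow> bool" where
  "leaf_set H L \<longleftrightarrow> (\<forall>e\<in>H. card (e \<inter> L) = 1) \<and> (\<forall>x\<in>L. \<forall>e\<in>H. \<forall>e'\<in>H. x \<in> e \<longrightarrow> x \<in> e' \<longrightarrow> e = e')"

definition star_forest :: "'a set set \<Rightarrow> bool" where
  "star_forest H \<longleftrightarrow> (\<exists>L\<subseteq>verts H. leaf_set H L)"

lemma star_forest_if_contains_copy:
  assumes "contains_copy M H" "leaf_set (set_mset M) D"
  shows "star_forest H"
proof -
  obtain f where f: "inj_on f (verts H)" "\<forall>e\<in>H. f ` e \<in># M"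
    using assms(1) unfolding contains_copy_def by blast
  define L where "L = {x \<in> verts H. f x \<in> D}"
  have "card (e \<inter> L) = 1" if e: "e \<in> H" for e
  proof -
    have sub: "e \<subseteq> verts H" using e unfolding verts_def by blast
    then have "f ` (e \<inter> L) = f ` e \<inter> D" using f(1) unfolding L_def by (auto dest: inj_onD)
    moreover have "inj_on f (e \<inter> L)" using f(1) sub by (blast intro: inj_on_subset)
    ultimately have "card (e \<inter> L) = card (f ` e \<inter> D)" by (metis card_image)
    then show ?thesis using assms(2) f(2) e unfolding leaf_set_def by simp
  qed
  moreover have "e = e'" if "x \<in> L" "e \<in> H" "e' \<in> H" "x \<in> e" "x \<in> e'" for x e e'
  proof -
    have "f x \<in> D" "f x \<in> f ` e" "f x \<in> f ` e'" using that unfolding L_def by auto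
    moreover have "f ` e \<in># M" "f ` e' \<in># M" using f(2) that(2,3) by auto
    ultimately have "f ` e = f ` e'" using assms(2) unfolding leaf_set_def by metis
    then show ?thesis using inj_on_edge_image[OF f(1)] that(2,3) by (auto dest: inj_onD)
  qed
  moreover have "L \<subseteq> verts H" unfolding L_def by blast
  ultimately show ?thesis unfolding star_forest_def leaf_set_def by blast
qed

lemma leaf_set_attached_leaves:
  assumes "\<And>v. v \<in> D \<Longrightarrow> p v \<notin> D"
  shows "leaf_set ((\<lambda>v. {v, p v}) ` D) D"
proof -
  have edge: "{v, p v} \<inter> D = {v}" if "v \<in> D" for v using that assms[OF that] by blast
  have "card (e \<inter> D) = 1" if "e \<in> (\<lambda>v. {v, p v}) ` D" for e
  proof -
    obtain v where "v \<in> D" "e = {v, p v}" using \<open>e \<in> (\<lambda>v. {v, p v}) ` D\<close> by blast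
    then have "e \<inter> D = {v}" using edge by blast
    then show ?thesis by simp
  qed
  moreover have "e = e'"
    if x: "x \<in> D" "e \<in> (\<lambda>v. {v, p v}) ` D" "e' \<in> (\<lambda>v. {v, p v}) ` D" "x \<in> e" "x \<in> e'" for x e e'
  proof -
    obtain v v' where v: "v \<in> D" "e = {v, p v}" "v' \<in> D" "e' = {v', p v'}" using x(2,3) by blast
    then have "x = v" "x = v'" using edge x(1,4,5) by blast+
    then show ?thesis using v by simp
  qed
  ultimately show ?thesis unfolding leaf_set_def by blast
qed

lemma card_vertices_lt_if_exM_lt:
  assumes G: "multigraph G" and "\<not> is_matching H" "\<not> star_forest H" and k: "exM G H < k"
  shows "card (\<Union>(set_mset G)) < 3 * k"
proof -
  obtain C where C: "finite C" "card C \<le> 2 * (k - 1)" "\<forall>e\<in>#G. e \<inter> C \<noteq> {}"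
    using multigraph_vertex_cover[OF G assms(2) k] .
  define D where "D = \<Union>(set_mset G) - C"
  have "\<exists>w. {v, w} \<in># G \<and> w \<in> C" if v: "v \<in> D" for v
  proof -
    obtain e where e: "e \<in># G" "v \<in> e" "v \<notin> C" using v unfolding D_def by auto
    then obtain w where w: "w \<in> e" "w \<in> C" using C(3) by blast
    then have "e = {v, w}" using e multigraph_edge_card[OF G e(1)] by (auto simp: card_2_iff)
    then show ?thesis using e w by blast
  qed
  then obtain p where p: "\<And>v. v \<in> D \<Longrightarrow> {v, p v} \<in># G \<and> p v \<in> C" by metis
  define T where "T = (\<lambda>v. {v, p v}) ` D"
  have DC: "D \<inter> C = {}" unfolding D_def by blast
  have TG: "T \<subseteq> set_mset G" unfolding T_def using p by blast
  have finT: "finite T" using TG finite_subset by blast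
  have "leaf_set T D" unfolding T_def using p DC by (intro leaf_set_attached_leaves) blast
  then have "\<not> contains_copy (mset_set T) H"
    using assms(3) finT star_forest_if_contains_copy[of "mset_set T" H D] by auto
  then have "card T \<le> exM G H" using exM_ge_size[OF mset_set_subseteq_mset[OF TG]] by simp
  moreover have "card T = card D"
    unfolding T_def using p DC by (intro card_image inj_onI) (auto simp: doubleton_eq_iff)
  ultimately have "card D \<le> k - 1" using k by linarith
  moreover have "card (\<Union>(set_mset G)) \<le> card (C \<union> D)"
    by (rule card_mono) (use C(1) finite_vertices_multigraph[OF G] in \<open>auto simp: D_def\<close>)
  ultimately show ?thesis using card_Un_le[of C D] C(2) k by linarith
qed

subsection \<open>Random placement into a complete graph\<close>

lemma complete_graph_eq: "complete_graph N = {e. e \<subseteq> {0..<N} \<and> card e = 2}"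
proof (intro set_eqI iffI)
  fix e assume "e \<in> complete_graph N"
  then show "e \<in> {e. e \<subseteq> {0..<N} \<and> card e = 2}" unfolding complete_graph_def by auto
next
  fix e assume "e \<in> {e. e \<subseteq> {0..<N} \<and> card e = 2}"
  then obtain a b where ab: "e = {a, b}" "a \<noteq> b" "a < N" "b < N" by (auto simp: card_2_iff)
  then consider "a < b" | "b < a" by linarith
  then show "e \<in> complete_graph N"
    by cases (use ab in \<open>auto simp: complete_graph_def insert_commute\<close>)
qed

lemma card_complete_graph: "card (complete_graph N) = N choose 2"
  unfolding complete_graph_eq using n_subsets[of "{0..<N}" 2] by simp

lemma finite_complete_graph: "finite (complete_graph N)"
  unfolding complete_graph_eq by (rule finite_subset[of _ "Pow {0..<N}"]) auto

lemma simple_graph_complete_graph: "simple_graph (complete_graph N)"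
  using finite_complete_graph unfolding simple_graph_def complete_graph_eq by auto

lemma permutes_image_complete_graph:
  assumes "\<sigma> permutes {0..<N}" "e \<in> complete_graph N"
  shows "\<sigma> ` e \<in> complete_graph N"
proof -
  have "inj_on \<sigma> e" using permutes_inj[OF assms(1)] inj_on_subset by blast
  then show ?thesis using assms permutes_image[OF assms(1)] unfolding complete_graph_eq
    by (auto simp: card_image)
qed

lemma bij_betw_permutes_complete_graph:
  assumes "\<sigma> permutes {0..<N}"
  shows "bij_betw ((`) \<sigma>) (complete_graph N) (complete_graph N)"
proof (rule bij_betw_imageI)
  show "inj_on ((`) \<sigma>) (complete_graph N)"
    using permutes_inj[OF assms] by (meson inj_image_eq_iff inj_onI)
  show "(`) \<sigma> ` complete_graph N = complete_graph N"
  proof (intro equalityI subsetI)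
    fix f assume f: "f \<in> complete_graph N"
    have "\<sigma> ` (inv \<sigma> ` f) = f" using permutes_surj[OF assms] by (simp add: image_comp surj_iff)
    moreover have "inv \<sigma> ` f \<in> complete_graph N"
      using permutes_image_complete_graph[OF permutes_inv[OF assms] f] .
    ultimately show "f \<in> (`) \<sigma> ` complete_graph N" by (metis image_eqI)
  qed (use permutes_image_complete_graph[OF assms] in blast)
qed

lemma complete_graph_edge_transitive:
  assumes "e \<in> complete_graph N" "e' \<in> complete_graph N"
  obtains \<tau> where "\<tau> permutes {0..<N}" "\<tau> ` e' = e"
proof -
  obtain a b where ab: "e' = {a, b}" "a \<noteq> b" "a < N" "b < N"
    using assms(2) unfolding complete_graph_eq by (auto simp: card_2_iff)
  obtain c d where cd: "e = {c, d}" "c \<noteq> d" "c < N" "d < N"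
    using assms(1) unfolding complete_graph_eq by (auto simp: card_2_iff)
  define t1 where "t1 = Transposition.transpose a c"
  define t2 where "t2 = Transposition.transpose (t1 b) d"
  have "t1 b < N" "c \<noteq> t1 b" using ab cd unfolding t1_def by (auto simp: transpose_def)
  then have "(t2 \<circ> t1) a = c" "(t2 \<circ> t1) b = d"
    using cd(2) unfolding t1_def t2_def by (auto simp: transpose_def)
  moreover have "t2 \<circ> t1 permutes {0..<N}"
    using ab cd \<open>t1 b < N\<close> unfolding t1_def t2_def
    by (intro permutes_compose permutes_swap_id) auto
  ultimately show ?thesis using that ab cd by auto
qed

lemma card_permutes_image_mem_le:
  assumes "e \<in> complete_graph N" "e' \<in> complete_graph N"
  shows "card {\<sigma>. \<sigma> permutes {0..<N} \<and> \<sigma> ` e \<in> F} \<le> card {\<sigma>. \<sigma> permutes {0..<N} \<and> \<sigma> ` e' \<in> F}"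
proof -
  obtain \<tau> where \<tau>: "\<tau> permutes {0..<N}" "\<tau> ` e' = e" using complete_graph_edge_transitive[OF assms] .
  have "inj_on (\<lambda>\<sigma>. \<sigma> \<circ> \<tau>) {\<sigma>. \<sigma> permutes {0..<N} \<and> \<sigma> ` e \<in> F}"
  proof (rule inj_onI)
    fix \<sigma> \<sigma>' assume "\<sigma> \<circ> \<tau> = \<sigma>' \<circ> \<tau>"
    then have "\<sigma> \<circ> (\<tau> \<circ> inv \<tau>) = \<sigma>' \<circ> (\<tau> \<circ> inv \<tau>)" by (metis comp_assoc)
    then show "\<sigma> = \<sigma>'" using permutes_inv_o(1)[OF \<tau>(1)] by simp
  qed
  moreover have "(\<lambda>\<sigma>. \<sigma> \<circ> \<tau>) ` {\<sigma>. \<sigma> permutes {0..<N} \<and> \<sigma> ` e \<in> F}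
      \<subseteq> {\<sigma>. \<sigma> permutes {0..<N} \<and> \<sigma> ` e' \<in> F}"
  proof (rule image_subsetI)
    fix \<sigma> assume "\<sigma> \<in> {\<sigma>. \<sigma> permutes {0..<N} \<and> \<sigma> ` e \<in> F}"
    then have \<sigma>: "\<sigma> permutes {0..<N}" "\<sigma> ` e \<in> F" by auto
    then have "(\<sigma> \<circ> \<tau>) ` e' \<in> F" by (simp only: image_comp[symmetric] \<tau>(2))
    then show "\<sigma> \<circ> \<tau> \<in> {\<sigma>. \<sigma> permutes {0..<N} \<and> \<sigma> ` e' \<in> F}"
      using permutes_compose[OF \<tau>(1) \<sigma>(1)] by blast
  qed
  moreover have "finite {\<sigma>. \<sigma> permutes {0..<N} \<and> \<sigma> ` e' \<in> F}"
    by (rule finite_subset[OF _ finite_permutations[of "{0..<N}"]]) auto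
  ultimately show ?thesis by (rule card_inj_on_le)
qed

text \<open>Double counting pairs of a permutation and an edge it maps into \<open>F\<close>: by edge-transitivity
  every edge is mapped into \<open>F\<close> by equally many permutations, and every permutation maps exactly
  \<open>card F\<close> edges into \<open>F\<close>.\<close>

lemma card_permutes_image_mem:
  assumes F: "F \<subseteq> complete_graph N" and e: "e \<in> complete_graph N"
  shows "card {\<sigma>. \<sigma> permutes {0..<N} \<and> \<sigma> ` e \<in> F} * (N choose 2)
       = card {\<sigma>. \<sigma> permutes {0..<N}} * card F"
proof -
  let ?P = "{\<sigma>. \<sigma> permutes {0..<N}}"
  let ?K = "complete_graph N"
  let ?X = "\<lambda>e. card {\<sigma>. \<sigma> permutes {0..<N} \<and> \<sigma> ` e \<in> F}"
  have finP: "finite ?P" using finite_permutations[of "{0..<N}"] by simp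
  have X_eq: "?X e' = (\<Sum>\<sigma>\<in>?P. if \<sigma> ` e' \<in> F then 1 else 0)" for e'
    using sum.inter_filter[OF finP, of "\<lambda>_. 1::nat"] by simp
  have preimage: "(\<Sum>e'\<in>?K. if \<sigma> ` e' \<in> F then 1 else 0) = card F" if "\<sigma> \<in> ?P" for \<sigma>
  proof -
    have bij: "bij_betw ((`) \<sigma>) ?K ?K" using that by (simp add: bij_betw_permutes_complete_graph)
    have "card {e'\<in>?K. \<sigma> ` e' \<in> F} = card ((`) \<sigma> ` {e'\<in>?K. \<sigma> ` e' \<in> F})"
      by (rule card_image[symmetric], rule inj_on_subset[OF bij_betw_imp_inj_on[OF bij]]) blast
    also have "(`) \<sigma> ` {e'\<in>?K. \<sigma> ` e' \<in> F} = F"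
    proof (intro equalityI subsetI)
      fix f assume "f \<in> F"
      then obtain e' where "e' \<in> ?K" "f = \<sigma> ` e'"
        using F bij_betw_imp_surj_on[OF bij] by (metis imageE subsetD)
      then show "f \<in> (`) \<sigma> ` {e'\<in>?K. \<sigma> ` e' \<in> F}" using \<open>f \<in> F\<close> by blast
    qed blast
    finally show ?thesis using sum.inter_filter[OF finite_complete_graph, of "\<lambda>_. 1::nat"] by simp
  qed
  have "?X e' = ?X e" if "e' \<in> ?K" for e'
    by (intro antisym card_permutes_image_mem_le that e)
  then have "card ?K * ?X e = (\<Sum>e'\<in>?K. ?X e')" by simp
  also have "\<dots> = (\<Sum>\<sigma>\<in>?P. \<Sum>e'\<in>?K. if \<sigma> ` e' \<in> F then 1 else 0)"
    unfolding X_eq by (rule sum.swap)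
  also have "\<dots> = card ?P * card F" using preimage by simp
  finally show ?thesis by (simp add: card_complete_graph mult.commute)
qed

lemma sum_size_filter_mset:
  assumes "finite P"
  shows "(\<Sum>\<sigma>\<in>P. size (filter_mset (Q \<sigma>) G)) = (\<Sum>e\<in>#G. card {\<sigma>\<in>P. Q \<sigma> e})"
proof (induction G)
  case (add x G)
  have "(\<Sum>\<sigma>\<in>P. size (filter_mset (Q \<sigma>) (add_mset x G)))
      = (\<Sum>\<sigma>\<in>P. size (filter_mset (Q \<sigma>) G)) + (\<Sum>\<sigma>\<in>P. if Q \<sigma> x then 1 else 0)"
    by (simp add: sum.distrib[symmetric]) (rule sum.cong, auto)
  also have "(\<Sum>\<sigma>\<in>P. if Q \<sigma> x then 1 else 0) = card {\<sigma>\<in>P. Q \<sigma> x}"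
    using sum.inter_filter[OF assms, of "\<lambda>_. 1::nat"] by simp
  finally show ?case using add by simp
qed simp

lemma not_contains_copy_landing:
  assumes "\<not> contains_copy (mset_set F) H" "finite F" "inj_on h (\<Union>(set_mset G))"
  shows "\<not> contains_copy (filter_mset (\<lambda>e. h ` e \<in> F) G) H"
proof
  assume "contains_copy (filter_mset (\<lambda>e. h ` e \<in> F) G) H"
  moreover have "inj_on h (\<Union>(set_mset (filter_mset (\<lambda>e. h ` e \<in> F) G)))"
    using assms(3) by (rule inj_on_subset) auto
  ultimately have "contains_copy (image_mset ((`) h) (filter_mset (\<lambda>e. h ` e \<in> F) G)) H"
    by (rule contains_copy_image)
  moreover have "set_mset (image_mset ((`) h) (filter_mset (\<lambda>e. h ` e \<in> F) G)) \<subseteq> set_mset (mset_set F)"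
    using assms(2) by auto
  ultimately show False using assms(1) contains_copy_set_mono by blast
qed

lemma image_edge_in_complete_graph:
  assumes "multigraph G" "\<iota> ` \<Union>(set_mset G) \<subseteq> {0..<N}" "inj_on \<iota> (\<Union>(set_mset G))" "e \<in># G"
  shows "\<iota> ` e \<in> complete_graph N"
proof -
  have "e \<subseteq> \<Union>(set_mset G)" using assms(4) by blast
  then have "card (\<iota> ` e) = card e" "\<iota> ` e \<subseteq> {0..<N}"
    using assms(2,3) by (auto intro: card_image inj_on_subset)
  then show ?thesis unfolding complete_graph_eq using multigraph_edge_card[OF assms(1,4)] by auto
qed

text \<open>Place \<open>G\<close> on the vertices of \<open>K\<^sub>N\<close> and apply a uniformly random permutation: the edges that
  land in the \<open>H\<close>-free graph \<open>F\<close> form an \<open>H\<close>-free subgraph of \<open>G\<close>, and every edge lands in \<open>F\<close>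
  with probability \<open>card F / (N choose 2)\<close>.\<close>

lemma exM_averaging:
  assumes G: "multigraph G" and V: "card (\<Union>(set_mset G)) \<le> N"
    and F: "F \<subseteq> complete_graph N" and F_free: "\<not> contains_copy (mset_set F) H"
  shows "size G * card F \<le> exM G H * (N choose 2)"
proof (cases "G = {#}")
  case False
  let ?U = "\<Union>(set_mset G)"
  let ?P = "{\<sigma>. \<sigma> permutes {0..<N}}"
  let ?X = "\<lambda>e. card {\<sigma>. \<sigma> permutes {0..<N} \<and> \<sigma> ` e \<in> F}"
  have finP: "finite ?P" using finite_permutations[of "{0..<N}"] by simp
  obtain \<iota> where \<iota>: "\<iota> ` ?U \<subseteq> {0..<N}" "inj_on \<iota> ?U"
    using card_le_inj[OF finite_vertices_multigraph[OF G], of "{0..<N}"] V by auto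
  let ?landed = "\<lambda>\<sigma>. filter_mset (\<lambda>e. (\<sigma> \<circ> \<iota>) ` e \<in> F) G"
  have \<iota>_edge: "\<iota> ` e \<in> complete_graph N" if "e \<in># G" for e
    using image_edge_in_complete_graph[OF G \<iota> that] .
  have landed_free: "\<not> contains_copy (?landed \<sigma>) H" if "\<sigma> \<in> ?P" for \<sigma>
    using permutes_inj[of \<sigma>] that \<iota>(2) finite_subset[OF F finite_complete_graph]
    by (intro not_contains_copy_landing[OF F_free] comp_inj_on) (auto intro: inj_on_subset)
  obtain e0 where e0: "e0 \<in># G" using False by (meson multiset_nonemptyE)
  have X_const: "?X (\<iota> ` e) = ?X (\<iota> ` e0)" if "e \<in># G" for e
    by (intro antisym card_permutes_image_mem_le \<iota>_edge that e0)
  have "size G * ?X (\<iota> ` e0) = (\<Sum>e\<in>#G. ?X (\<iota> ` e))"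
    using image_mset_cong[of G "\<lambda>e. ?X (\<iota> ` e)" "\<lambda>_. ?X (\<iota> ` e0)", OF X_const] by simp
  also have "\<dots> = (\<Sum>\<sigma>\<in>?P. size (?landed \<sigma>))"
    using sum_size_filter_mset[OF finP, of "\<lambda>\<sigma> e. (\<sigma> \<circ> \<iota>) ` e \<in> F" G] by (simp add: comp_def image_image)
  also have "\<dots> \<le> (\<Sum>\<sigma>\<in>?P. exM G H)"
    using landed_free by (intro sum_mono exM_ge_size multiset_filter_subset)
  finally have bound: "size G * ?X (\<iota> ` e0) \<le> card ?P * exM G H" by simp
  have "card ?P * (size G * card F) = size G * (card ?P * card F)" by (simp add: ac_simps)
  also have "\<dots> = size G * ?X (\<iota> ` e0) * (N choose 2)"
    by (simp add: card_permutes_image_mem[OF F \<iota>_edge[OF e0], symmetric] mult.assoc)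
  also have "\<dots> \<le> card ?P * (exM G H * (N choose 2))"
    using mult_le_mono1[OF bound, of "N choose 2"] by (simp only: mult.assoc)
  finally have "card ?P * (size G * card F) \<le> card ?P * (exM G H * (N choose 2))" .
  moreover have "card ?P > 0"
    using finP permutes_id[of "{0..<N}"] by (auto simp: card_gt_0_iff simp del: permutes_id)
  ultimately show ?thesis by simp
qed simp

subsection \<open>Extremal numbers of star forests\<close>

lemma greedy_distinct_representatives:
  assumes "finite L" "finite A" "\<And>l. l \<in> L \<Longrightarrow> card A + card L \<le> card (S l)"
  obtains \<phi> where "inj_on \<phi> L" "\<And>l. l \<in> L \<Longrightarrow> \<phi> l \<in> S l - A"
proof -
  have "\<exists>\<phi>. inj_on \<phi> L \<and> (\<forall>l\<in>L. \<phi> l \<in> S l - A)"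
    using assms(1,3)
  proof (induction L rule: finite_induct)
    case (insert a L)
    then obtain \<phi> where \<phi>: "inj_on \<phi> L" "\<forall>l\<in>L. \<phi> l \<in> S l - A" by fastforce
    have "card (A \<union> \<phi> ` L) \<le> card A + card L"
      using card_Un_le[of A "\<phi> ` L"] card_image_le[OF insert.hyps(1), of \<phi>] by linarith
    also have "\<dots> < card (S a)" using insert.prems[of a] insert.hyps by simp
    finally have "\<not> S a \<subseteq> A \<union> \<phi> ` L"
      using assms(2) insert.hyps(1) by (meson card_mono finite_UnI finite_imageI not_le)
    then obtain w where w: "w \<in> S a" "w \<notin> A" "w \<notin> \<phi> ` L" by blast
    have "inj_on (\<phi>(a := w)) (insert a L)"
      using \<phi>(1) w(3) insert.hyps(2) by (auto simp: inj_on_def)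
    moreover have "\<forall>l\<in>insert a L. (\<phi>(a := w)) l \<in> S l - A"
      using \<phi>(2) w(1,2) insert.hyps(2) by auto
    ultimately show ?case by blast
  qed simp
  then show ?thesis using that by blast
qed

lemma finite_verts_simple_graph: "simple_graph H \<Longrightarrow> finite (verts H)"
  unfolding simple_graph_def verts_def by (metis card.infinite finite_Union zero_neq_numeral)

lemma leaf_set_centre:
  assumes "simple_graph H" "L \<subseteq> verts H" "leaf_set H L" "l \<in> L"
  obtains c where "{l, c} \<in> H" "c \<in> verts H - L" "\<And>e. e \<in> H \<Longrightarrow> l \<in> e \<Longrightarrow> e = {l, c}"
proof -
  obtain e where e: "e \<in> H" "l \<in> e" using assms(2,4) unfolding verts_def by blast
  moreover have "card e = 2" using assms(1) e(1) unfolding simple_graph_def by blast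
  ultimately obtain c where c: "e = {l, c}" "c \<noteq> l" by (auto simp: card_2_iff)
  have "card (e \<inter> L) = 1" using assms(3) e(1) unfolding leaf_set_def by blast
  then have "c \<notin> L" using c assms(4) by (auto simp: card_2_iff)
  moreover have "e' = e" if "e' \<in> H" "l \<in> e'" for e'
    using assms(3,4) e that unfolding leaf_set_def by blast
  ultimately show ?thesis using that e c unfolding verts_def by blast
qed

lemma contains_copy_if_centres_high_degree:
  fixes H :: "'a set set" and F :: "'b set set" and g :: "'a \<Rightarrow> 'b"
  assumes H: "simple_graph H" "L \<subseteq> verts H" "leaf_set H L" and F: "finite F"
    and g: "inj_on g (verts H - L)" "\<And>z. z \<in> verts H - L \<Longrightarrow> card (verts H) \<le> card {w. {g z, w} \<in> F}"
  shows "contains_copy (mset_set F) H"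
proof -
  let ?Z = "verts H - L"
  have finV: "finite (verts H)" using finite_verts_simple_graph[OF H(1)] .
  then have finL: "finite L" using H(2) finite_subset by blast
  have card_V: "card (verts H) = card ?Z + card L" using H(2) finV finL
    by (metis card_Diff_subset card_mono le_add_diff_inverse2)
  have "\<exists>c. {l, c} \<in> H \<and> c \<in> ?Z \<and> (\<forall>e\<in>H. l \<in> e \<longrightarrow> e = {l, c})" if "l \<in> L" for l
    using leaf_set_centre[OF H that] by metis
  then obtain c where c: "\<And>l. l \<in> L \<Longrightarrow> {l, c l} \<in> H \<and> c l \<in> ?Z \<and> (\<forall>e\<in>H. l \<in> e \<longrightarrow> e = {l, c l})"
    by metis
  obtain \<phi> where \<phi>: "inj_on \<phi> L" "\<And>l. l \<in> L \<Longrightarrow> \<phi> l \<in> {w. {g (c l), w} \<in> F} - g ` ?Z"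
  proof (rule greedy_distinct_representatives[OF finL])
    show "card (g ` ?Z) + card L \<le> card {w. {g (c l), w} \<in> F}" if "l \<in> L" for l
      using card_image_le[of ?Z g] finV g(2)[of "c l"] c[OF that] card_V by fastforce
  qed (use finV in auto)
  define f where "f x = (if x \<in> L then \<phi> x else g x)" for x
  have "inj_on f (L \<union> ?Z)"
  proof (subst inj_on_Un, intro conjI)
    show "inj_on f L" using \<phi>(1) inj_on_cong[of L f \<phi>] by (simp add: f_def)
    show "inj_on f ?Z" using g(1) inj_on_cong[of ?Z f g] by (simp add: f_def)
    show "f ` (L - ?Z) \<inter> f ` (?Z - L) = {}" using \<phi>(2) by (auto simp: f_def)
  qed
  moreover have "L \<union> ?Z = verts H" using H(2) by blast
  ultimately have "inj_on f (verts H)" by simp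
  moreover have "f ` e \<in> F" if e: "e \<in> H" for e
  proof -
    have "card (e \<inter> L) = 1" using H(3) e unfolding leaf_set_def by blast
    then obtain l where "e \<inter> L = {l}" by (auto simp: card_1_singleton_iff)
    then have l: "l \<in> L" "l \<in> e" by auto
    then have "e = {l, c l}" using c e by blast
    then have "f ` e = {g (c l), \<phi> l}" using c[OF l(1)] l(1) unfolding f_def by auto
    then show ?thesis using \<phi>(2)[OF l(1)] by simp
  qed
  ultimately show ?thesis using F unfolding contains_copy_def by auto
qed

lemma deg_mset_set_eq_card_neighbours:
  assumes "finite F" "\<forall>e\<in>F. card e = 2"
  shows "deg (mset_set F) v = card {w. {v, w} \<in> F}"
proof -
  have "{e \<in> F. v \<in> e} = (\<lambda>w. {v, w}) ` {w. {v, w} \<in> F}"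
  proof (intro equalityI subsetI)
    fix e assume e: "e \<in> {e \<in> F. v \<in> e}"
    then have "card e = 2" using assms(2) by blast
    then obtain w where "e = {v, w}" using e by (auto simp: card_2_iff)
    then show "e \<in> (\<lambda>w. {v, w}) ` {w. {v, w} \<in> F}" using e by auto
  qed auto
  moreover have "inj_on (\<lambda>w. {v, w}) {w. {v, w} \<in> F}" by (auto simp: inj_on_def doubleton_eq_iff)
  ultimately show ?thesis using assms(1) by (simp add: deg_def card_image)
qed

lemma card_high_degree_lt:
  assumes H: "simple_graph H" "L \<subseteq> verts H" "leaf_set H L"
    and F: "finite F" "\<forall>e\<in>F. card e = 2" "\<not> contains_copy (mset_set F) H"
    and B: "finite B" "\<And>v. v \<in> B \<Longrightarrow> card (verts H) \<le> deg (mset_set F) v"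
  shows "card B < card (verts H - L)"
proof (rule ccontr)
  assume "\<not> card B < card (verts H - L)"
  then obtain g where "g ` (verts H - L) \<subseteq> B" "inj_on g (verts H - L)"
    using card_le_inj[of "verts H - L" B] finite_verts_simple_graph[OF H(1)] B(1) by auto
  then have "contains_copy (mset_set F) H"
    using contains_copy_if_centres_high_degree[OF H F(1)] B(2)
    unfolding deg_mset_set_eq_card_neighbours[OF F(1,2)] by blast
  then show False using F(3) by blast
qed

lemma ex_complete_graph_le_if_star_forest:
  fixes H :: "'a set set"
  assumes H: "simple_graph H" "star_forest H" "H \<noteq> {}"
  shows "ex (complete_graph n) H \<le> 2 * card (verts H) * n"
proof -
  obtain L where L: "L \<subseteq> verts H" "leaf_set H L" using H(2) unfolding star_forest_def by blast
  let ?Z = "verts H - L" and ?h = "card (verts H)"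
  obtain F where F: "F \<subseteq> complete_graph n" "\<not> contains_copy (mset_set F) H" "card F = ex (complete_graph n) H"
    using ex_attained[OF finite_complete_graph H(3)] .
  have finF: "finite F" using F(1) finite_complete_graph finite_subset by blast
  have F_edges: "\<forall>e\<in>F. card e = 2 \<and> e \<subseteq> {0..<n}" using F(1) unfolding complete_graph_eq by auto
  let ?deg = "deg (mset_set F)"
  have deg_eq: "?deg v = card {w. {v, w} \<in> F}" for v
    using deg_mset_set_eq_card_neighbours[OF finF] F_edges by blast
  have deg_le: "?deg v \<le> n" for v
  proof -
    have "{w. {v, w} \<in> F} \<subseteq> {0..<n}" using F_edges by auto
    then show ?thesis unfolding deg_eq using card_mono[of "{0..<n}"] by fastforce
  qed
  define B where "B = {v \<in> {0..<n}. ?h \<le> ?deg v}"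
  have finV: "finite (verts H)" using finite_verts_simple_graph[OF H(1)] .
  have card_B: "card B < card ?Z"
    using F_edges F(2) unfolding B_def by (intro card_high_degree_lt[OF H(1) L finF]) auto
  have "card F \<le> (\<Sum>v\<in>{0..<n}. ?deg v)"
    using size_le_sum_deg_cover[of "{0..<n}" "mset_set F"] finF F_edges by (fastforce simp: card_2_iff)
  also have "\<dots> = (\<Sum>v\<in>B. ?deg v) + (\<Sum>v\<in>{0..<n} - B. ?deg v)"
    using sum.subset_diff[of B "{0..<n}" ?deg] unfolding B_def by fastforce
  also have "\<dots> \<le> card B * n + card ({0..<n} - B) * ?h"
    using sum_mono[of B ?deg "\<lambda>_. n"] sum_mono[of "{0..<n} - B" ?deg "\<lambda>_. ?h"] deg_le
    by (force simp: B_def)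
  also have "\<dots> \<le> ?h * n + n * ?h"
    using card_B card_mono[OF finV, of ?Z] card_mono[of "{0..<n}" "{0..<n} - B"]
    by (intro add_mono mult_mono) auto
  finally show ?thesis using F(3) by (simp add: algebra_simps)
qed

lemma exponent_le_one_if_star_forest:
  assumes "simple_graph H" "star_forest H" "H \<noteq> {}"
    and "(\<lambda>n. real (ex (complete_graph n) H)) \<in> \<Omega>(\<lambda>n. real n powr \<beta>)"
  shows "\<beta> \<le> 1"
proof -
  have "(\<lambda>n. real (ex (complete_graph n) H)) \<in> O(\<lambda>n. real n powr 1)"
    using ex_complete_graph_le_if_star_forest[OF assms(1-3)]
    by (intro bigoI[of _ "2 * real (card (verts H))"] always_eventually allI)
      (use of_nat_mono in fastforce)
  then have "(\<lambda>n. real n powr \<beta>) \<in> O(\<lambda>n. real n powr 1)"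
    using assms(4) by (auto simp: bigomega_iff_bigo intro: landau_o.big_trans)
  then show ?thesis by (subst (asm) powr_bigo_iff[OF filterlim_real_sequentially]) simp_all
qed

subsection \<open>The two bounds\<close>

lemma E_simple_ge:
  fixes G :: "nat set set"
  assumes "simple_graph G" "ex G H < k"
  shows "ereal (real (card G)) \<le> E_simple H k"
  unfolding E_simple_def by (rule Sup_upper) (use assms in auto)

lemma E_multi_le:
  assumes "\<And>G :: nat set multiset. multigraph G \<Longrightarrow> exM G H < k \<Longrightarrow> real (size G) \<le> B"
  shows "E_multi H k \<le> ereal B"
  unfolding E_multi_def by (rule Sup_least) (use assms in auto)

lemma card_complete_graph_floor_ge:
  fixes x :: real
  assumes "x \<ge> 4"
  shows "x\<^sup>2 / 16 \<le> real (card (complete_graph (nat \<lfloor>x\<rfloor>)))"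
proof -
  define n where "n = nat \<lfloor>x\<rfloor>"
  have n: "real n \<le> x" "x - 1 \<le> real n" "n \<ge> 1" unfolding n_def using assms by linarith+
  have "4 * x \<le> x * x" using assms by (intro mult_right_mono) auto
  moreover have "(x - 1) * (x - 2) = x * x - 3 * x + 2" by (simp add: algebra_simps)
  ultimately have "x\<^sup>2 / 8 \<le> (x - 1) * (x - 2)" unfolding power2_eq_square using assms by linarith
  also have "\<dots> \<le> real n * (real n - 1)" using n assms by (intro mult_mono) auto
  also have "\<dots> = 2 * real (n choose 2)"
    using n(3) by (simp add: choose_two of_nat_diff real_of_nat_div dvd_triv_left)
  finally show ?thesis unfolding n_def card_complete_graph by simp
qed

lemma E_simple_ge_powr:
  assumes \<alpha>: "\<alpha> > 0" and C: "C > 0"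
    and ex_le: "\<And>n. n \<ge> n1 \<Longrightarrow> real (ex (complete_graph n) H) \<le> C * real n powr \<alpha>"
    and k: "2 * C * (real n1 + 4) powr \<alpha> \<le> real k"
  shows "ereal (1 / (16 * (2 * C) powr (2 / \<alpha>)) * real k powr (2 / \<alpha>)) \<le> E_simple H k"
proof -
  define x where "x = (real k / (2 * C)) powr (1 / \<alpha>)"
  have "(real n1 + 4) powr \<alpha> \<le> real k / (2 * C)" using k C by (simp add: field_simps)
  then have x: "real n1 + 4 \<le> x"
    unfolding x_def using \<alpha> powr_mono2[of "1 / \<alpha>" "(real n1 + 4) powr \<alpha>" "real k / (2 * C)"]
    by (simp add: powr_powr)
  define n where "n = nat \<lfloor>x\<rfloor>"
  have "n \<ge> n1" "real n \<le> x" using x unfolding n_def by linarith+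
  have "real (ex (complete_graph n) H) \<le> C * x powr \<alpha>"
    using ex_le[OF \<open>n \<ge> n1\<close>] C \<alpha> \<open>real n \<le> x\<close> powr_mono2[of \<alpha> "real n" x]
    by (smt (verit) mult_left_mono of_nat_0_le_iff)
  also have "C * x powr \<alpha> = real k / 2" unfolding x_def using \<alpha> C by (simp add: powr_powr)
  finally have "real (ex (complete_graph n) H) \<le> real k / 2" .
  moreover have "0 < 2 * C * (real n1 + 4) powr \<alpha>" using C by simp
  ultimately have "real (ex (complete_graph n) H) < real k" using k by linarith
  then have ex_lt: "ex (complete_graph n) H < k" by simp
  have "1 / (16 * (2 * C) powr (2 / \<alpha>)) * real k powr (2 / \<alpha>) = x\<^sup>2 / 16"
    unfolding x_def using C by (simp add: powr_divide powr_powr power2_eq_square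
        powr_add[symmetric] field_simps)
  also have "\<dots> \<le> real (card (complete_graph n))"
    unfolding n_def using x by (intro card_complete_graph_floor_ge) simp
  finally have "ereal (1 / (16 * (2 * C) powr (2 / \<alpha>)) * real k powr (2 / \<alpha>))
      \<le> ereal (real (card (complete_graph n)))"
    by simp
  also have "\<dots> \<le> E_simple H k" using ex_lt by (rule E_simple_ge[OF simple_graph_complete_graph])
  finally show ?thesis .
qed

lemma E_simple_lower_bound:
  assumes \<alpha>: "\<alpha> > 0" and O: "(\<lambda>n. real (ex (complete_graph n) H)) \<in> O(\<lambda>n. real n powr \<alpha>)"
  shows "\<exists>c>0. \<forall>\<^sub>F k in at_top. ereal (c * real k powr (2 / \<alpha>)) \<le> E_simple H k"
proof -
  obtain C where C: "C > 0" "\<forall>\<^sub>F n in at_top. real (ex (complete_graph n) H) \<le> C * real n powr \<alpha>"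
    using landau_o.bigE[OF O] by auto
  then obtain n1 where n1: "\<And>n. n \<ge> n1 \<Longrightarrow> real (ex (complete_graph n) H) \<le> C * real n powr \<alpha>"
    by (auto simp: eventually_at_top_linorder)
  have "\<forall>\<^sub>F k in at_top. 2 * C * (real n1 + 4) powr \<alpha> \<le> real k"
    using filterlim_real_sequentially unfolding filterlim_at_top by blast
  then have "\<forall>\<^sub>F k in at_top.
      ereal (1 / (16 * (2 * C) powr (2 / \<alpha>)) * real k powr (2 / \<alpha>)) \<le> E_simple H k"
    by (rule eventually_mono) (rule E_simple_ge_powr[OF \<alpha> C(1) n1])
  moreover have "1 / (16 * (2 * C) powr (2 / \<alpha>)) > 0" using C(1) by simp
  ultimately show ?thesis by blast
qed

lemma size_le_if_not_star_forest:
  assumes H: "simple_graph H" "\<not> is_matching H" "\<not> star_forest H"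
    and c: "c > 0" "c * real (3 * k) powr \<beta> \<le> real (ex (complete_graph (3 * k)) H)"
    and G: "multigraph G" "exM G H < k"
  shows "real (size G) \<le> 3 powr (2 - \<beta>) / c * real k powr (3 - \<beta>)"
proof -
  define N where "N = 3 * k"
  have "k > 0" using G(2) by simp
  have "H \<noteq> {}" using H(3) unfolding star_forest_def leaf_set_def by auto
  obtain F where F: "F \<subseteq> complete_graph N" "\<not> contains_copy (mset_set F) H"
    "card F = ex (complete_graph N) H"
    using ex_attained[OF finite_complete_graph \<open>H \<noteq> {}\<close>] .
  have "card (\<Union>(set_mset G)) \<le> N"
    using card_vertices_lt_if_exM_lt[OF G(1) H(2,3) G(2)] unfolding N_def by simp
  then have "size G * card F \<le> exM G H * (N choose 2)" by (rule exM_averaging[OF G(1) _ F(1,2)])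
  also have "\<dots> \<le> k * N ^ 2"
    using G(2) binomial_le_pow[of 2 N] \<open>k > 0\<close> unfolding N_def by (intro mult_mono) auto
  finally have "real (size G) * real (card F) \<le> real k * real N ^ 2"
    using of_nat_mono by fastforce
  moreover have "real (size G) * (c * real N powr \<beta>) \<le> real (size G) * real (card F)"
    using c(2) F(3) unfolding N_def by (intro mult_left_mono) auto
  ultimately have "real (size G) * (c * real N powr \<beta>) \<le> real k * real N ^ 2" by linarith
  moreover have "real k * real N ^ 2 = 3 powr (2 - \<beta>) * real k powr (3 - \<beta>) * real N powr \<beta>"
  proof -
    have "3 powr (2 - \<beta>) * real k powr (3 - \<beta>) * real N powr \<beta>
        = (3 powr (2 - \<beta>) * 3 powr \<beta>) * (real k powr (3 - \<beta>) * real k powr \<beta>)"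
      unfolding N_def by (simp add: powr_mult ac_simps)
    also have "\<dots> = 3 powr 2 * real k powr 3" by (simp add: powr_add[symmetric])
    also have "\<dots> = real k * real N ^ 2"
      unfolding N_def by (simp add: powr_numeral power2_eq_square power3_eq_cube)
    finally show ?thesis by simp
  qed
  moreover have "real N powr \<beta> > 0" using \<open>k > 0\<close> unfolding N_def by simp
  ultimately show ?thesis using c(1) by (simp add: field_simps)
qed

lemma E_multi_upper_bound:
  assumes H: "simple_graph H" "\<not> is_matching H" "\<not> is_star H"
    and \<Omega>: "(\<lambda>n. real (ex (complete_graph n) H)) \<in> \<Omega>(\<lambda>n. real n powr \<beta>)"
  shows "\<exists>C>0. \<forall>\<^sub>F k in at_top. E_multi H k \<le> ereal (C * real k powr (3 - \<beta>))"
proof (cases "star_forest H")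
  case True
  have "H \<noteq> {}" using H(3) unfolding is_star_def by auto
  then have "\<beta> \<le> 1" using exponent_le_one_if_star_forest[OF H(1) True _ \<Omega>] by blast
  have "E_multi H k \<le> ereal (2 * real k powr (3 - \<beta>))" for k
  proof (rule E_multi_le)
    fix G :: "nat set multiset" assume G: "multigraph G" "exM G H < k"
    have "size G \<le> 2 * k * k" by (rule size_le_if_exM_lt[OF G(1) H(2,3) G(2)])
    then have "real (size G) \<le> 2 * real k * real k" using of_nat_mono by fastforce
    also have "\<dots> = 2 * real k powr 2" by (simp add: powr_numeral power2_eq_square)
    also have "\<dots> \<le> 2 * real k powr (3 - \<beta>)"
      using \<open>\<beta> \<le> 1\<close> G(2) by (intro mult_left_mono powr_mono) auto
    finally show "real (size G) \<le> 2 * real k powr (3 - \<beta>)" .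
  qed
  then show ?thesis by (intro exI[of _ 2]) auto
next
  case False
  obtain c where c: "c > 0" "\<forall>\<^sub>F n in at_top. c * real n powr \<beta> \<le> real (ex (complete_graph n) H)"
    using landau_omega.bigE[OF \<Omega>] by auto
  then obtain n0 where n0: "\<And>n. n \<ge> n0 \<Longrightarrow> c * real n powr \<beta> \<le> real (ex (complete_graph n) H)"
    by (auto simp: eventually_at_top_linorder)
  define C where "C = 3 powr (2 - \<beta>) / c"
  have "E_multi H k \<le> ereal (C * real k powr (3 - \<beta>))" if "k \<ge> n0" for k
    using size_le_if_not_star_forest[OF H(1,2) False c(1) n0[of "3 * k"]] that
    unfolding C_def by (intro E_multi_le) simp
  moreover have "C > 0" unfolding C_def using c(1) by simp
  ultimately show ?thesis by (auto simp: eventually_at_top_linorder)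
qed

theorem theorem3p23:
  fixes H :: "'a set set" and \<alpha> \<beta> :: real
  assumes "simple_graph H" and "\<not> is_matching H" and "\<not> is_star H"
    and "\<alpha> > 0" and "\<beta> > 0"
  shows "((\<lambda>n. real (ex (complete_graph n) H)) \<in> O(\<lambda>n. real n powr \<alpha>) \<longrightarrow>
           (\<exists>c>0. \<forall>\<^sub>F k in at_top. ereal (c * real k powr (2 / \<alpha>)) \<le> E_simple H k))
       \<and> ((\<lambda>n. real (ex (complete_graph n) H)) \<in> \<Omega>(\<lambda>n. real n powr \<beta>) \<longrightarrow>
           (\<exists>C>0. \<forall>\<^sub>F k in at_top. E_multi H k \<le> ereal (C * real k powr (3 - \<beta>))))"
  using E_simple_lower_bound[OF assms(4)] E_multi_upper_bound[OF assms(1-3)] by blast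

end
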